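(* Let $\gamma=(\alpha,\beta)\in\mathbb N_0^{2n}$ with $\alpha\ge\beta$, let $\sigma\in\{+,-\}$ with $\alpha>\beta$ if $\sigma=-$, and let $\tilde\gamma=(\tilde\alpha,\tilde\alpha)\in\mathbb N_0^{2n}$. Let $z_\sigma^{(\ell)}$ be the Commutator Chain of Type I generated by $g_\sigma^\gamma$ and $g_+^{\tilde\gamma}$. Assume there is an index $k$ with $\alpha_k\neq\beta_k$ and $\tilde\alpha_k\neq0$. Then for every $\ell\ge0$, $z_\sigma^{(\ell)}\neq0$ and $$\deg(z_\sigma^{(\ell)})=2\ell(|\tilde\alpha|-1)+|\alpha|+|\beta| .$$
   Context: Fix $n\ge 1$. The Weyl algebra $A_n$ is the unital associative $\mathbb{C}$-algebra generated by $a_1,\dots,a_n,a_1^\dagger,\dots,a_n^\dagger$ subject to $[a_i,a_j^\dagger]=\delta_{ij}$ and $[a_i,a_j]=[a_i^\dagger,a_j^\dagger]=0$. For $\gamma=(\alpha,\beta)\in\mathbb N_0^{2n}$ set $a^{\gamma}=(a_1^\dagger)^{\alpha_1}\cdots(a_n^\dagger)^{\alpha_n}a_1^{\beta_1}\cdots a_n^{\beta_n}$; these form a $\mathbb C$-basis; $|\alpha|=\sum_j\alpha_j$, $|\gamma|=|\alpha|+|\beta|$. For $0\neq g\in A_n$, $\deg(g)$ is the largest $|\gamma|$ with $a^\gamma$ having nonzero coefficient in $g$; $\deg(0)=-\infty$. $\dagger$ is the conjugate-linear anti-automorphism with $(a_j)^\dagger=a_j^\dagger$, $(a_j^\dagger)^\dagger=a_j$.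 $\hat A_n=\{g\in A_n:g^\dagger=-g\}$; $g_+^\gamma=i((a^\gamma)^\dagger+a^\gamma)$, $g_-^\gamma=(a^\gamma)^\dagger-a^\gamma$. The order on $\mathbb N_0^n$ is lexicographic. Commutator Chain of Type I generated by $g_\sigma^\gamma$ and $g_+^{\tilde\gamma}$ (with $\tilde\gamma=(\tilde\alpha,\tilde\alpha)$): $z_\sigma^{(0)}=g_\sigma^\gamma$ and $z_\sigma^{(\ell+1)}=[g_+^{\tilde\gamma},z_\sigma^{(\ell)}]$ for $\ell\ge0$. *)

theory Defs
  imports Complex_Main
begin

text \<open>Weyl algebra A_n, represented in the normal-ordered basis
  a^(alpha,beta) = (a_1^dag)^alpha_1 ... (a_n^dag)^alpha_n a_1^beta_1 ... a_n^beta_n.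
  Indices are 0..n-1. A multi-index is a function nat => nat vanishing at j >= n.
  An element of A_n is its finitely supported coefficient function.\<close>

type_synonym mono = "(nat \<Rightarrow> nat) \<times> (nat \<Rightarrow> nat)"
type_synonym weyl = "mono \<Rightarrow> complex"

definition wsupp :: "weyl \<Rightarrow> mono set" where
  "wsupp f = {\<gamma>. f \<gamma> \<noteq> 0}"

definition mabs :: "nat \<Rightarrow> (nat \<Rightarrow> nat) \<Rightarrow> nat" where
  "mabs n \<alpha> = (\<Sum>j<n. \<alpha> j)"

text \<open>Coefficient of a^c in the product a^a * a^b, obtained by normal ordering
  with a_j^beta (a_j^dag)^alpha' = sum_k k! C(beta,k) C(alpha',k) (a_j^dag)^(alpha'-k) a_j^(beta-k).\<close>
definition mono_coeff :: "nat \<Rightarrow> mono \<Rightarrow> mono \<Rightarrow> mono \<Rightarrow> nat" where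
  "mono_coeff n a b c =
    (let \<kappa> = (\<lambda>j. fst a j + fst b j - fst c j) in
     if (\<forall>j<n. fst c j \<le> fst a j + fst b j \<and> \<kappa> j \<le> snd a j \<and> \<kappa> j \<le> fst b j
               \<and> snd c j + \<kappa> j = snd a j + snd b j)
        \<and> (\<forall>j\<ge>n. fst c j = 0 \<and> snd c j = 0)
     then (\<Prod>j<n. fact (\<kappa> j) * (snd a j choose \<kappa> j) * (fst b j choose \<kappa> j))
     else 0)"

definition wmult :: "nat \<Rightarrow> weyl \<Rightarrow> weyl \<Rightarrow> weyl" where
  "wmult n f g = (\<lambda>\<delta>. \<Sum>\<gamma>1\<in>wsupp f. \<Sum>\<gamma>2\<in>wsupp g.
       f \<gamma>1 * g \<gamma>2 * of_nat (mono_coeff n \<gamma>1 \<gamma>2 \<delta>))"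

definition wcomm :: "nat \<Rightarrow> weyl \<Rightarrow> weyl \<Rightarrow> weyl" where
  "wcomm n f g = (\<lambda>\<delta>. wmult n f g \<delta> - wmult n g f \<delta>)"

definition basis :: "mono \<Rightarrow> weyl" where
  "basis \<gamma> = (\<lambda>\<delta>. if \<delta> = \<gamma> then 1 else 0)"

definition mdag :: "mono \<Rightarrow> mono" where
  "mdag \<gamma> = (snd \<gamma>, fst \<gamma>)"

datatype sign = Plus | Minus

definition gen :: "sign \<Rightarrow> mono \<Rightarrow> weyl" where
  "gen \<sigma> \<gamma> = (case \<sigma> of
      Plus \<Rightarrow> (\<lambda>\<delta>. \<i> * (basis (mdag \<gamma>) \<delta> + basis \<gamma> \<delta>))
    | Minus \<Rightarrow> (\<lambda>\<delta>. basis (mdag \<gamma>) \<delta> - basis \<gamma> \<delta>))"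

text \<open>deg for nonzero elements (largest |gamma| in the support).\<close>
definition wdeg :: "nat \<Rightarrow> weyl \<Rightarrow> nat" where
  "wdeg n f = Max ((\<lambda>\<gamma>. mabs n (fst \<gamma>) + mabs n (snd \<gamma>)) ` wsupp f)"

definition lex_gt :: "nat \<Rightarrow> (nat \<Rightarrow> nat) \<Rightarrow> (nat \<Rightarrow> nat) \<Rightarrow> bool" where
  "lex_gt n \<alpha> \<beta> = (\<exists>j<n. (\<forall>i<j. \<alpha> i = \<beta> i) \<and> \<beta> j < \<alpha> j)"

definition lex_ge :: "nat \<Rightarrow> (nat \<Rightarrow> nat) \<Rightarrow> (nat \<Rightarrow> nat) \<Rightarrow> bool" where
  "lex_ge n \<alpha> \<beta> = ((\<forall>j<n. \<alpha> j = \<beta> j) \<or> lex_gt n \<alpha> \<beta>)"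

definition chainI :: "nat \<Rightarrow> weyl \<Rightarrow> weyl \<Rightarrow> nat \<Rightarrow> weyl" where
  "chainI n g h l = ((\<lambda>z. wcomm n h z) ^^ l) g"

end

theory Submission
  imports Defs
begin

(* Let t = alpha_t and h = g_+^(t,t) = 2i a^(t,t). Normal ordering a^(t,t) a^gamma produces terms
   indexed by contraction vectors kappa, of degree |gamma| + 2|t| - 2|kappa|, and the terms with
   kappa = 0 cancel in the commutator [h, f]. So every step of the chain raises the degree by at
   most 2(|t| - 1). The monomial lead m = (alpha + m s, beta + m s) with s = t - e_k attains this
   bound; a componentwise bound on the support shows that at step m + 1 it can only come from
   lead m with the single contraction e_k, and then its coefficient is multiplied by
   2i t_k (alpha_k - beta_k), which is nonzero. *)

definition mdeg :: "nat \<Rightarrow> mono \<Rightarrow> nat" where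
  "mdeg n \<gamma> = mabs n (fst \<gamma>) + mabs n (snd \<gamma>)"

definition contraction :: "mono \<Rightarrow> mono \<Rightarrow> mono \<Rightarrow> nat \<Rightarrow> nat" where
  "contraction a b c j = fst a j + fst b j - fst c j"

lemma contraction_commute: "contraction b a c = contraction a b c"
  by (simp add: contraction_def fun_eq_iff add.commute)

lemma mono_coeff_eq:
  "mono_coeff n a b c =
    (if (\<forall>j<n. fst c j \<le> fst a j + fst b j \<and> contraction a b c j \<le> snd a j
               \<and> contraction a b c j \<le> fst b j \<and> snd c j + contraction a b c j = snd a j + snd b j)
        \<and> (\<forall>j\<ge>n. fst c j = 0 \<and> snd c j = 0)
     then (\<Prod>j<n. fact (contraction a b c j) * (snd a j choose contraction a b c j)
                     * (fst b j choose contraction a b c j))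
     else 0)"
  unfolding mono_coeff_def contraction_def Let_def ..

definition in_product_support :: "nat \<Rightarrow> mono \<Rightarrow> mono \<Rightarrow> mono \<Rightarrow> bool" where
  "in_product_support n a b c \<longleftrightarrow>
     (\<forall>j<n. fst c j \<le> fst a j + fst b j \<and> snd c j + contraction a b c j = snd a j + snd b j)
     \<and> (\<forall>j\<ge>n. fst c j = 0 \<and> snd c j = 0)"

lemma in_product_support_commute:
  "in_product_support n b a c = in_product_support n a b c"
  unfolding in_product_support_def contraction_def by (simp add: add.commute)

lemma in_product_support_if_mono_coeff_nonzero:
  "mono_coeff n a b c \<noteq> 0 \<Longrightarrow> in_product_support n a b c"
  unfolding mono_coeff_eq in_product_support_def by (auto split: if_splits)

lemma comp_sum_in_product_support:
  assumes "in_product_support n a b c" and "j < n"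
  shows "fst c j + snd c j + 2 * contraction a b c j = fst a j + snd a j + (fst b j + snd b j)"
  using assms unfolding in_product_support_def contraction_def by auto

lemma mdeg_in_product_support:
  assumes "in_product_support n a b c"
  shows "mdeg n c + 2 * (\<Sum>j<n. contraction a b c j) = mdeg n a + mdeg n b"
proof -
  have "(\<Sum>j<n. fst c j + snd c j + 2 * contraction a b c j)
      = (\<Sum>j<n. fst a j + snd a j + (fst b j + snd b j))"
    using comp_sum_in_product_support[OF assms] by (intro sum.cong) auto
  then show ?thesis
    unfolding mdeg_def mabs_def by (simp add: sum.distrib sum_distrib_left)
qed

lemma mono_coeff_commute_if_no_contraction:
  assumes "\<forall>j<n. contraction a b c j = 0"
  shows "mono_coeff n a b c = mono_coeff n b a c"
  using assms unfolding mono_coeff_eq contraction_commute[of b a]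
  by (auto simp: add.commute)

lemma mono_coeff_unit_contraction:
  assumes "k < n"
    and "\<forall>j<n. contraction a b c j = (if j = k then 1 else 0)"
    and "\<forall>j<n. fst c j \<le> fst a j + fst b j"
    and "\<forall>j<n. snd c j + (if j = k then 1 else 0) = snd a j + snd b j"
    and "\<forall>j\<ge>n. fst c j = 0 \<and> snd c j = 0"
  shows "mono_coeff n a b c = snd a k * fst b k"
proof (cases "1 \<le> snd a k \<and> 1 \<le> fst b k")
  case True
  have "(\<Prod>j<n. fact (contraction a b c j) * (snd a j choose contraction a b c j)
                  * (fst b j choose contraction a b c j))
      = (\<Prod>j<n. if j = k then snd a k * fst b k else 1)"
    using assms(2) by (intro prod.cong) auto
  also have "\<dots> = snd a k * fst b k"
    using assms(1) by simp
  finally show ?thesis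
    using assms True unfolding mono_coeff_eq by (subst if_P) auto
next
  case False
  then show ?thesis
    using assms(1,2) unfolding mono_coeff_eq by force
qed

lemma mono_coeff_commutator_nonzeroD:
  assumes "mono_coeff n a b c \<noteq> mono_coeff n b a c"
  shows "\<exists>j<n. contraction a b c j > 0" and "in_product_support n a b c"
proof -
  show "\<exists>j<n. contraction a b c j > 0"
    using assms mono_coeff_commute_if_no_contraction[of n a b c] by (meson neq0_conv)
  have "mono_coeff n a b c \<noteq> 0 \<or> mono_coeff n b a c \<noteq> 0"
    using assms by auto
  then show "in_product_support n a b c"
    using in_product_support_if_mono_coeff_nonzero[of n a b c]
      in_product_support_if_mono_coeff_nonzero[of n b a c] in_product_support_commute[of n a b c]
    by blast
qed

lemma finite_mono_box:
  assumes "\<forall>j\<ge>n. U j = (0::nat)"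
  shows "finite {\<gamma>::mono. \<forall>j. fst \<gamma> j + snd \<gamma> j \<le> U j}"
proof -
  define F where "F = {f::nat \<Rightarrow> nat. \<forall>j. (j \<in> {..<n} \<longrightarrow> f j \<in> {..Max (U ` {..<n})})
                                          \<and> (j \<notin> {..<n} \<longrightarrow> f j = 0)}"
  have in_F: "f \<in> F" if f_le: "\<And>j. f j \<le> U j" for f
    unfolding F_def
  proof (intro CollectI allI conjI impI)
    fix j assume "j \<in> {..<n}"
    then have "U j \<le> Max (U ` {..<n})"
      by (intro Max_ge) auto
    then show "f j \<in> {..Max (U ` {..<n})}"
      using f_le[of j] by simp
  next
    fix j assume "j \<notin> {..<n}"
    then show "f j = 0"
      using f_le[of j] assms by simp
  qed
  have "{\<gamma>::mono. \<forall>j. fst \<gamma> j + snd \<gamma> j \<le> U j} \<subseteq> F \<times> F"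
  proof
    fix \<gamma> :: mono assume "\<gamma> \<in> {\<gamma>. \<forall>j. fst \<gamma> j + snd \<gamma> j \<le> U j}"
    then have "fst \<gamma> j + snd \<gamma> j \<le> U j" for j
      by simp
    then have "fst \<gamma> j \<le> U j" "snd \<gamma> j \<le> U j" for j
      by (meson add_leD1 add_leD2)+
    then show "\<gamma> \<in> F \<times> F"
      using in_F by (simp add: mem_Times_iff)
  qed
  moreover have "finite F"
    unfolding F_def by (rule finite_set_of_finite_funs) auto
  ultimately show ?thesis
    by (meson finite_SigmaI finite_subset)
qed

lemma wsupp_gen_Plus_diag: "wsupp (gen Plus (t, t)) = {(t, t)}"
  unfolding wsupp_def gen_def basis_def mdag_def by auto

lemma wcomm_gen_Plus_diag:
  "wcomm n (gen Plus (t, t)) f \<delta> = (\<Sum>\<gamma>\<in>wsupp f. 2 * \<i> * f \<gamma> *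
      (of_nat (mono_coeff n (t, t) \<gamma> \<delta>) - of_nat (mono_coeff n \<gamma> (t, t) \<delta>)))"
proof -
  have "gen Plus (t, t) (t, t) = 2 * \<i>"
    unfolding gen_def basis_def mdag_def by simp
  then show ?thesis
    unfolding wcomm_def wmult_def wsupp_gen_Plus_diag
    by (simp add: sum_subtractf[symmetric] algebra_simps)
qed

lemma wcomm_gen_Plus_diag_nonzeroD:
  assumes "wcomm n (gen Plus (t, t)) f \<delta> \<noteq> 0"
  obtains \<gamma> where "f \<gamma> \<noteq> 0" and "mono_coeff n (t, t) \<gamma> \<delta> \<noteq> mono_coeff n \<gamma> (t, t) \<delta>"
proof -
  obtain \<gamma> where "\<gamma> \<in> wsupp f"
    and "2 * \<i> * f \<gamma> * (of_nat (mono_coeff n (t, t) \<gamma> \<delta>) - of_nat (mono_coeff n \<gamma> (t, t) \<delta>))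
         \<noteq> (0::complex)"
    using assms unfolding wcomm_gen_Plus_diag by (meson sum.neutral)
  then show ?thesis
    using that by (auto simp: wsupp_def)
qed

lemma unit_vector_if_sum_le_one:
  fixes \<kappa> :: "nat \<Rightarrow> nat"
  assumes "(\<Sum>j<n. \<kappa> j) \<le> 1" and "j0 < n" and "\<kappa> j0 > 0"
  shows "\<forall>j<n. \<kappa> j = (if j = j0 then 1 else 0)"
proof (intro allI impI)
  fix j assume "j < n"
  show "\<kappa> j = (if j = j0 then 1 else 0)"
  proof (cases "j = j0")
    case True
    have "\<kappa> j0 \<le> (\<Sum>i<n. \<kappa> i)"
      using assms(2) by (intro member_le_sum) auto
    then have "\<kappa> j0 = 1"
      using assms by linarith
    then show ?thesis using True by simp
  next
    case False
    have "(\<Sum>i\<in>{j0, j}. \<kappa> i) \<le> (\<Sum>i<n. \<kappa> i)"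
      using \<open>j < n\<close> assms(2) by (intro sum_mono2) auto
    then show ?thesis using False assms by simp
  qed
qed

locale type_I_chain =
  fixes n k :: nat and \<alpha> \<beta> t :: "nat \<Rightarrow> nat"
  assumes \<alpha>_vanish: "\<forall>j\<ge>n. \<alpha> j = 0" and \<beta>_vanish: "\<forall>j\<ge>n. \<beta> j = 0"
    and t_vanish: "\<forall>j\<ge>n. t j = 0"
    and k_less: "k < n" and \<alpha>_\<beta>_differ: "\<alpha> k \<noteq> \<beta> k" and t_k_nonzero: "t k \<noteq> 0"
begin

definition shift :: "nat \<Rightarrow> nat" where
  "shift j = t j - (if j = k then 1 else 0)"

definition lead :: "nat \<Rightarrow> mono" where
  "lead m = ((\<lambda>j. \<alpha> j + m * shift j), (\<lambda>j. \<beta> j + m * shift j))"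

definition comp_bound :: "nat \<Rightarrow> nat \<Rightarrow> nat" where
  "comp_bound m j = \<alpha> j + \<beta> j + 2 * m * t j"

definition deg_bound :: "nat \<Rightarrow> nat" where
  "deg_bound m = mabs n \<alpha> + mabs n \<beta> + 2 * m * (mabs n t - 1)"

text \<open>The componentwise bound is what identifies the predecessor of \<open>lead (Suc m)\<close>:
  \<open>lead m\<close> attains it in every index but \<open>k\<close>.\<close>
definition bounded :: "nat \<Rightarrow> weyl \<Rightarrow> bool" where
  "bounded m f \<longleftrightarrow>
     (\<forall>\<gamma>. f \<gamma> \<noteq> 0 \<longrightarrow> (\<forall>j. fst \<gamma> j + snd \<gamma> j \<le> comp_bound m j) \<and> mdeg n \<gamma> \<le> deg_bound m)"

definition chain_inv :: "nat \<Rightarrow> weyl \<Rightarrow> bool" where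
  "chain_inv m f \<longleftrightarrow> bounded m f \<and> f (lead m) \<noteq> 0"

lemma shift_add_unit: "shift j + (if j = k then 1 else 0) = t j"
  using t_k_nonzero by (simp add: shift_def)

lemma sum_shift: "(\<Sum>j<n. shift j) + 1 = mabs n t"
proof -
  have "(\<Sum>j<n. shift j + (if j = k then 1 else 0)) = mabs n t"
    unfolding mabs_def by (simp add: shift_add_unit)
  then show ?thesis
    using k_less by (simp add: sum.distrib)
qed

lemma one_le_mabs: "1 \<le> mabs n t"
  using sum_shift by linarith

lemma mdeg_lead: "mdeg n (lead m) = deg_bound m"
proof -
  have "mdeg n (lead m) = mabs n \<alpha> + mabs n \<beta> + 2 * m * (\<Sum>j<n. shift j)"
    unfolding mdeg_def mabs_def lead_def
    by (simp add: sum.distrib sum_distrib_left[symmetric] algebra_simps)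
  moreover have "(\<Sum>j<n. shift j) = mabs n t - 1"
    using sum_shift by linarith
  ultimately show ?thesis
    by (simp add: deg_bound_def)
qed

lemma lead_vanish: "j \<ge> n \<Longrightarrow> fst (lead m) j = 0 \<and> snd (lead m) j = 0"
  using \<alpha>_vanish \<beta>_vanish t_vanish k_less by (simp add: lead_def shift_def)

lemma lead_Suc:
  "fst (lead (Suc m)) j = fst (lead m) j + shift j"
  "snd (lead (Suc m)) j = snd (lead m) j + shift j"
  by (simp_all add: lead_def)

lemma comp_bound_Suc: "comp_bound (Suc m) j = comp_bound m j + 2 * t j"
  by (simp add: comp_bound_def)

lemma comp_bound_vanish: "j \<ge> n \<Longrightarrow> comp_bound m j = 0"
  using \<alpha>_vanish \<beta>_vanish t_vanish by (simp add: comp_bound_def)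

lemma deg_bound_Suc: "deg_bound (Suc m) = deg_bound m + 2 * (mabs n t - 1)"
  by (simp add: deg_bound_def)

lemma comp_bound_lead: "j \<noteq> k \<Longrightarrow> fst (lead m) j + snd (lead m) j = comp_bound m j"
  by (simp add: lead_def comp_bound_def shift_def algebra_simps)

lemma finite_wsupp_if_bounded: "bounded m f \<Longrightarrow> finite (wsupp f)"
proof -
  assume "bounded m f"
  then have "wsupp f \<subseteq> {\<gamma>. \<forall>j. fst \<gamma> j + snd \<gamma> j \<le> comp_bound m j}"
    unfolding bounded_def wsupp_def by auto
  moreover have "finite {\<gamma>::mono. \<forall>j. fst \<gamma> j + snd \<gamma> j \<le> comp_bound m j}"
    using comp_bound_vanish by (intro finite_mono_box[of n]) simp
  ultimately show ?thesis
    by (rule finite_subset)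
qed

lemma chain_inv_0: "chain_inv 0 (gen \<sigma> (\<alpha>, \<beta>))"
proof -
  have swap_ne: "(\<beta>, \<alpha>) \<noteq> (\<alpha>, \<beta>)"
    using \<alpha>_\<beta>_differ by auto
  have supp: "\<gamma> = (\<alpha>, \<beta>) \<or> \<gamma> = (\<beta>, \<alpha>)" if "gen \<sigma> (\<alpha>, \<beta>) \<gamma> \<noteq> 0" for \<gamma>
    using that unfolding gen_def basis_def mdag_def by (cases \<sigma>) (auto split: if_splits)
  have "bounded 0 (gen \<sigma> (\<alpha>, \<beta>))"
    unfolding bounded_def comp_bound_def deg_bound_def mdeg_def
  proof (intro allI impI)
    fix \<gamma> assume "gen \<sigma> (\<alpha>, \<beta>) \<gamma> \<noteq> 0"
    from supp[OF this] show "(\<forall>j. fst \<gamma> j + snd \<gamma> j \<le> \<alpha> j + \<beta> j + 2 * 0 * t j)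
        \<and> mabs n (fst \<gamma>) + mabs n (snd \<gamma>) \<le> mabs n \<alpha> + mabs n \<beta> + 2 * 0 * (mabs n t - 1)"
      by (elim disjE) (auto simp: add.commute)
  qed
  moreover have "gen \<sigma> (\<alpha>, \<beta>) (lead 0) \<noteq> 0"
    using swap_ne unfolding lead_def gen_def basis_def mdag_def by (cases \<sigma>) auto
  ultimately show ?thesis
    unfolding chain_inv_def ..
qed

lemma wcomm_term_bounded:
  assumes "bounded m f" and "f \<gamma> \<noteq> 0"
    and "mono_coeff n (t, t) \<gamma> \<delta> \<noteq> mono_coeff n \<gamma> (t, t) \<delta>"
  shows "(\<forall>j. fst \<delta> j + snd \<delta> j \<le> comp_bound (Suc m) j) \<and> mdeg n \<delta> \<le> deg_bound (Suc m)"
proof -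
  let ?\<kappa> = "contraction (t, t) \<gamma> \<delta>"
  note support = mono_coeff_commutator_nonzeroD[OF assms(3)]
  have \<gamma>_comp: "fst \<gamma> j + snd \<gamma> j \<le> comp_bound m j" and \<gamma>_deg: "mdeg n \<gamma> \<le> deg_bound m" for j
    using assms(1,2) unfolding bounded_def by blast+
  obtain j0 where "j0 < n" and "?\<kappa> j0 > 0"
    using support(1) by blast
  then have "?\<kappa> j0 \<le> (\<Sum>j<n. ?\<kappa> j)"
    by (intro member_le_sum) auto
  moreover have "mdeg n \<delta> + 2 * (\<Sum>j<n. ?\<kappa> j) = 2 * mabs n t + mdeg n \<gamma>"
    using mdeg_in_product_support[OF support(2)] by (simp add: mdeg_def)
  ultimately have "mdeg n \<delta> \<le> deg_bound (Suc m)"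
    using \<open>?\<kappa> j0 > 0\<close> \<gamma>_deg deg_bound_Suc[of m] by linarith
  moreover have "fst \<delta> j + snd \<delta> j \<le> comp_bound (Suc m) j" for j
  proof (cases "j < n")
    case True
    then show ?thesis
      using comp_sum_in_product_support[OF support(2) True] \<gamma>_comp[of j] comp_bound_Suc[of m j]
      by simp
  next
    case False
    then show ?thesis
      using support(2) unfolding in_product_support_def by simp
  qed
  ultimately show ?thesis
    by blast
qed

lemma wcomm_term_at_lead:
  assumes "bounded m f" and "f \<gamma> \<noteq> 0"
    and "mono_coeff n (t, t) \<gamma> (lead (Suc m)) \<noteq> mono_coeff n \<gamma> (t, t) (lead (Suc m))"
  shows "\<gamma> = lead m"
proof -
  let ?\<delta> = "lead (Suc m)"
  let ?\<kappa> = "contraction (t, t) \<gamma> ?\<delta>"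
  note support = mono_coeff_commutator_nonzeroD[OF assms(3)]
  have \<gamma>_comp: "fst \<gamma> j + snd \<gamma> j \<le> comp_bound m j" and \<gamma>_deg: "mdeg n \<gamma> \<le> deg_bound m" for j
    using assms(1,2) unfolding bounded_def by blast+
  obtain j0 where "j0 < n" and "?\<kappa> j0 > 0"
    using support(1) by blast
  have "mdeg n ?\<delta> + 2 * (\<Sum>j<n. ?\<kappa> j) = 2 * mabs n t + mdeg n \<gamma>"
    using mdeg_in_product_support[OF support(2)] by (simp add: mdeg_def)
  then have "(\<Sum>j<n. ?\<kappa> j) \<le> 1"
    using \<gamma>_deg mdeg_lead[of "Suc m"] deg_bound_Suc[of m] sum_shift by linarith
  then have \<kappa>_unit: "\<forall>j<n. ?\<kappa> j = (if j = j0 then 1 else 0)"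
    using \<open>j0 < n\<close> \<open>?\<kappa> j0 > 0\<close> by (rule unit_vector_if_sum_le_one)
  have "j0 = k"
  proof (rule ccontr)
    assume "j0 \<noteq> k"
    then have "fst ?\<delta> j0 + snd ?\<delta> j0 = comp_bound (Suc m) j0"
      by (rule comp_bound_lead)
    then show False
      using comp_sum_in_product_support[OF support(2) \<open>j0 < n\<close>] \<kappa>_unit \<open>j0 < n\<close>
        \<gamma>_comp[of j0] comp_bound_Suc[of m j0] by simp
  qed
  have "fst \<gamma> j = fst (lead m) j \<and> snd \<gamma> j = snd (lead m) j" for j
  proof (cases "j < n")
    case True
    have "?\<kappa> j + fst ?\<delta> j = t j + fst \<gamma> j" and "snd ?\<delta> j + ?\<kappa> j = t j + snd \<gamma> j"
      using support(2) True unfolding in_product_support_def contraction_def by auto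
    moreover have "?\<kappa> j + shift j = t j"
      using \<kappa>_unit \<open>j0 = k\<close> True shift_add_unit[of j] by (cases "j = k") auto
    ultimately show ?thesis
      using lead_Suc[of m j] by linarith
  next
    case False
    then show ?thesis
      using \<gamma>_comp[of j] comp_bound_vanish lead_vanish by simp
  qed
  then show ?thesis
    by (simp add: prod_eq_iff fun_eq_iff)
qed

lemma mono_coeff_lead_Suc:
  "mono_coeff n (t, t) (lead m) (lead (Suc m)) = t k * fst (lead m) k"
  "mono_coeff n (lead m) (t, t) (lead (Suc m)) = snd (lead m) k * t k"
proof -
  have "mono_coeff n (t, t) (lead m) (lead (Suc m)) = snd (t, t) k * fst (lead m) k"
    using k_less lead_vanish t_vanish t_k_nonzero
    by (intro mono_coeff_unit_contraction) (auto simp: contraction_def lead_Suc shift_def)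
  then show "mono_coeff n (t, t) (lead m) (lead (Suc m)) = t k * fst (lead m) k"
    by simp
  have "mono_coeff n (lead m) (t, t) (lead (Suc m)) = snd (lead m) k * fst (t, t) k"
    using k_less lead_vanish t_vanish t_k_nonzero
    by (intro mono_coeff_unit_contraction) (auto simp: contraction_def lead_Suc shift_def)
  then show "mono_coeff n (lead m) (t, t) (lead (Suc m)) = snd (lead m) k * t k"
    by simp
qed

lemma bounded_wcomm:
  assumes "bounded m f"
  shows "bounded (Suc m) (wcomm n (gen Plus (t, t)) f)"
  unfolding bounded_def
proof (intro allI impI)
  fix \<delta> assume "wcomm n (gen Plus (t, t)) f \<delta> \<noteq> 0"
  then obtain \<gamma> where "f \<gamma> \<noteq> 0" and "mono_coeff n (t, t) \<gamma> \<delta> \<noteq> mono_coeff n \<gamma> (t, t) \<delta>"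
    by (rule wcomm_gen_Plus_diag_nonzeroD)
  then show "(\<forall>j. fst \<delta> j + snd \<delta> j \<le> comp_bound (Suc m) j) \<and> mdeg n \<delta> \<le> deg_bound (Suc m)"
    using assms by (rule wcomm_term_bounded[rotated])
qed

lemma wcomm_at_lead:
  assumes "bounded m f"
  shows "wcomm n (gen Plus (t, t)) f (lead (Suc m))
       = 2 * \<i> * f (lead m) * (of_nat (t k * fst (lead m) k) - of_nat (snd (lead m) k * t k))"
proof -
  define summand where "summand \<gamma> = 2 * \<i> * f \<gamma> * (of_nat (mono_coeff n (t, t) \<gamma> (lead (Suc m)))
                          - of_nat (mono_coeff n \<gamma> (t, t) (lead (Suc m))) :: complex)" for \<gamma>
  have "summand \<gamma> = 0" if "\<gamma> \<noteq> lead m" for \<gamma>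
    using wcomm_term_at_lead[OF assms, of \<gamma>] that by (auto simp: summand_def)
  then have "wcomm n (gen Plus (t, t)) f (lead (Suc m))
           = (\<Sum>\<gamma>\<in>wsupp f. if \<gamma> = lead m then summand (lead m) else 0)"
    unfolding wcomm_gen_Plus_diag summand_def[symmetric] by (intro sum.cong) auto
  also have "\<dots> = summand (lead m)"
    using finite_wsupp_if_bounded[OF assms] by (simp add: wsupp_def summand_def)
  finally show ?thesis
    by (simp add: summand_def mono_coeff_lead_Suc)
qed

lemma chain_inv_Suc:
  assumes "chain_inv m f"
  shows "chain_inv (Suc m) (wcomm n (gen Plus (t, t)) f)"
proof -
  have "t k * fst (lead m) k \<noteq> snd (lead m) k * t k"
    using \<alpha>_\<beta>_differ t_k_nonzero by (simp add: lead_def)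
  then have "wcomm n (gen Plus (t, t)) f (lead (Suc m)) \<noteq> 0"
    using assms unfolding chain_inv_def by (simp add: wcomm_at_lead)
  then show ?thesis
    using assms bounded_wcomm unfolding chain_inv_def by blast
qed

lemma chain_inv_chainI: "chain_inv l (chainI n (gen \<sigma> (\<alpha>, \<beta>)) (gen Plus (t, t)) l)"
  by (induction l) (simp_all add: chainI_def chain_inv_0 chain_inv_Suc)

lemma chainI_nonzero: "chainI n (gen \<sigma> (\<alpha>, \<beta>)) (gen Plus (t, t)) l \<noteq> (\<lambda>_. 0)"
  using chain_inv_chainI[of l \<sigma>] unfolding chain_inv_def by auto

lemma wdeg_chainI: "wdeg n (chainI n (gen \<sigma> (\<alpha>, \<beta>)) (gen Plus (t, t)) l) = deg_bound l"
proof -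
  let ?z = "chainI n (gen \<sigma> (\<alpha>, \<beta>)) (gen Plus (t, t)) l"
  have inv: "bounded l ?z" "?z (lead l) \<noteq> 0"
    using chain_inv_chainI unfolding chain_inv_def by blast+
  have "Max (mdeg n ` wsupp ?z) = deg_bound l"
  proof (rule Max_eqI)
    show "finite (mdeg n ` wsupp ?z)"
      using finite_wsupp_if_bounded[OF inv(1)] by simp
    show "d \<le> deg_bound l" if "d \<in> mdeg n ` wsupp ?z" for d
      using that inv(1) by (auto simp: bounded_def wsupp_def)
    show "deg_bound l \<in> mdeg n ` wsupp ?z"
      using inv(2) mdeg_lead[of l] by (auto simp: wsupp_def intro!: image_eqI[of _ _ "lead l"])
  qed
  then show ?thesis
    unfolding wdeg_def mdeg_def[abs_def] .
qed

end

theorem theorem6: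
  fixes n k :: nat and \<alpha> \<beta> \<alpha>t :: "nat \<Rightarrow> nat" and \<sigma> :: sign
  assumes "n \<ge> 1"
    and "\<forall>j\<ge>n. \<alpha> j = 0" and "\<forall>j\<ge>n. \<beta> j = 0" and "\<forall>j\<ge>n. \<alpha>t j = 0"
    and "lex_ge n \<alpha> \<beta>"
    and "\<sigma> = Minus \<longrightarrow> lex_gt n \<alpha> \<beta>"
    and "k < n" and "\<alpha> k \<noteq> \<beta> k" and "\<alpha>t k \<noteq> 0"
  shows "\<forall>l. chainI n (gen \<sigma> (\<alpha>, \<beta>)) (gen Plus (\<alpha>t, \<alpha>t)) l \<noteq> (\<lambda>_. 0)
           \<and> int (wdeg n (chainI n (gen \<sigma> (\<alpha>, \<beta>)) (gen Plus (\<alpha>t, \<alpha>t)) l))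
               = 2 * int l * (int (mabs n \<alpha>t) - 1) + int (mabs n \<alpha>) + int (mabs n \<beta>)"
proof -
  interpret type_I_chain n k \<alpha> \<beta> \<alpha>t
    using assms by unfold_locales auto
  show ?thesis
    using chainI_nonzero wdeg_chainI one_le_mabs by (simp add: deg_bound_def of_nat_diff)
qed

end
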